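(* Let $N,K\ge1$, $T\ge1$, $\phi_r\in\mathbb{R}$, $\sigma_r^2>0$. For $t=1,\dots,T$ independently let $\theta_t\sim\mathcal{N}(\phi_r,\sigma_r^2)$, and conditionally on $\theta_t$ let $x_{t,1},\dots,x_{t,N}$ and $y_{t,1},\dots,y_{t,K}$ be independent $\mathcal{N}(\theta_t,1)$. Define $$\ell_t^{\mathrm{tr}}(\theta_t,\phi,\sigma^2)=\tfrac12\log\sigma^2+\frac{(\theta_t-\phi)^2}{2\sigma^2}+\tfrac12\sum_{n=1}^N(x_{t,n}-\theta_t)^2,\qquad \ell_{\mathrm{joint}}=\sum_{t=1}^T\ell_t^{\mathrm{tr}},\qquad \ell_t^{\mathrm{val}}(\theta_t)=\tfrac12\sum_{k=1}^K(y_{t,k}-\theta_t)^2.$$ For $\sigma^2>0$ let $(\hat\phi(\sigma^2),\hat\theta_{1:T}(\sigma^2))$ be the minimizer of $\ell_{\mathrm{joint}}(\theta_{1:T},\phi,\sigma^2)$ over $(\phi,\theta_{1:T})$. Define the approximate gradient $$g(\sigma^2)=-\sum_{t=1}^T\frac{\partial\ell_t^{\mathrm{val}}}{\partial\theta_t}(\theta_t)\Big(\frac{\partial^2\ell_t^{\mathrm{tr}}}{\partial\theta_t^2}\Big)^{-1}\frac{\partial^2\ell_t^{\mathrm{tr}}}{\partial\theta_t\,\partial\sigma^2}$$ evaluated at $\theta_t=\hat\theta_t(\sigma^2)$, $\phi=\hat\phi(\sigma^2)$ (i.e. treating $\phi$ as a constant, ignoring the dependence of $\hat\phi$ on $\sigma^2$),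 and let $\hat\sigma^2$ be the solution of $g(\sigma^2)=0$. Then, as $T\to\infty$, $\hat\phi(\hat\sigma^2)\to\phi_r$ and $\hat\sigma^2\to\sigma_r^2$ in probability.
   Context: $\ell_{\mathrm{joint}}$ is, up to an additive constant, the negative joint log-density of task parameters and training data given $(\phi,\sigma^2)$; $\ell_t^{\mathrm{val}}$ is, up to a constant, the negative log-likelihood of the validation data of task $t$. *)

theory Defs
  imports "HOL-Probability.Probability"
begin

text \<open>Tasks are indexed by t < T, training points by n < N, validation points by k < K.
  x t n and y t k denote (realised) observations.\<close>

definition l_tr :: "nat \<Rightarrow> (nat \<Rightarrow> nat \<Rightarrow> real) \<Rightarrow> nat \<Rightarrow> real \<Rightarrow> real \<Rightarrow> real \<Rightarrow> real" where
  "l_tr N x t \<theta> \<phi> s = ln s / 2 + (\<theta> - \<phi>)\<^sup>2 / (2 * s) + (1/2) * (\<Sum>n<N. (x t n - \<theta>)\<^sup>2)"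

definition l_joint :: "nat \<Rightarrow> (nat \<Rightarrow> nat \<Rightarrow> real) \<Rightarrow> nat \<Rightarrow> (nat \<Rightarrow> real) \<Rightarrow> real \<Rightarrow> real \<Rightarrow> real" where
  "l_joint N x T \<theta>s \<phi> s = (\<Sum>t<T. l_tr N x t (\<theta>s t) \<phi> s)"

definition l_val :: "nat \<Rightarrow> (nat \<Rightarrow> nat \<Rightarrow> real) \<Rightarrow> nat \<Rightarrow> real \<Rightarrow> real" where
  "l_val K y t \<theta> = (1/2) * (\<Sum>k<K. (y t k - \<theta>)\<^sup>2)"

definition is_joint_min :: "nat \<Rightarrow> (nat \<Rightarrow> nat \<Rightarrow> real) \<Rightarrow> nat \<Rightarrow> real \<Rightarrow> real \<Rightarrow> (nat \<Rightarrow> real) \<Rightarrow> bool" where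
  "is_joint_min N x T s \<phi> \<theta>s \<longleftrightarrow>
     (\<forall>\<phi>' \<theta>s'. l_joint N x T \<theta>s \<phi> s \<le> l_joint N x T \<theta>s' \<phi>' s)"

definition approx_grad ::
  "nat \<Rightarrow> nat \<Rightarrow> (nat \<Rightarrow> nat \<Rightarrow> real) \<Rightarrow> (nat \<Rightarrow> nat \<Rightarrow> real) \<Rightarrow> nat \<Rightarrow> real \<Rightarrow> (nat \<Rightarrow> real) \<Rightarrow> real \<Rightarrow> real" where
  "approx_grad N K x y T \<phi> \<theta>s s =
     - (\<Sum>t<T. deriv (l_val K y t) (\<theta>s t)
              * inverse (deriv (deriv (\<lambda>\<theta>. l_tr N x t \<theta> \<phi> s)) (\<theta>s t))
              * deriv (\<lambda>s'. deriv (\<lambda>\<theta>. l_tr N x t \<theta> \<phi> s') (\<theta>s t)) s)"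

definition estimate_good ::
  "nat \<Rightarrow> nat \<Rightarrow> (nat \<Rightarrow> nat \<Rightarrow> real) \<Rightarrow> (nat \<Rightarrow> nat \<Rightarrow> real) \<Rightarrow> nat \<Rightarrow> real \<Rightarrow> real \<Rightarrow> real \<Rightarrow> bool" where
  "estimate_good N K x y T \<phi>r \<sigma>r2 \<epsilon> \<longleftrightarrow>
     (\<exists>s>0. \<exists>\<phi> \<theta>s. is_joint_min N x T s \<phi> \<theta>s \<and> approx_grad N K x y T \<phi> \<theta>s s = 0) \<and>
     (\<forall>s>0. \<forall>\<phi> \<theta>s. is_joint_min N x T s \<phi> \<theta>s \<and> approx_grad N K x y T \<phi> \<theta>s s = 0 \<longrightarrow>
        \<bar>\<phi> - \<phi>r\<bar> < \<epsilon> \<and> \<bar>s - \<sigma>r2\<bar> < \<epsilon>)"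

text \<open>Index set for the independent building blocks of the model.\<close>
datatype obs_idx = Task nat | Tr nat nat | Val nat nat

definition obs_indices :: "nat \<Rightarrow> nat \<Rightarrow> obs_idx set" where
  "obs_indices N K = range Task \<union> {Tr t n | t n. n < N} \<union> {Val t k | t k. k < K}"

definition obs_family ::
  "(nat \<Rightarrow> 'a \<Rightarrow> real) \<Rightarrow> (nat \<Rightarrow> nat \<Rightarrow> 'a \<Rightarrow> real) \<Rightarrow> (nat \<Rightarrow> nat \<Rightarrow> 'a \<Rightarrow> real)
     \<Rightarrow> obs_idx \<Rightarrow> 'a \<Rightarrow> real" where
  "obs_family \<theta> x y i = (case i of
      Task t \<Rightarrow> \<theta> t
    | Tr t n \<Rightarrow> (\<lambda>\<omega>. x t n \<omega> - \<theta> t \<omega>)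
    | Val t k \<Rightarrow> (\<lambda>\<omega>. y t k \<omega> - \<theta> t \<omega>))"

end

(* The joint loss is a positive definite quadratic in (phi, theta_1, ..., theta_T): its minimiser
   is the grand mean phi^ of the per-task training means xbar_t together with the shrinkage
   estimates theta^_t = (phi^ + s N xbar_t) / (1 + s N). At this minimiser the approximate
   hypergradient is a positive multiple of s N S_xx - (1 + s N) S_xy, where S_xx and S_xy are the
   scatters of xbar_t and of (xbar_t, ybar_t) around phi^, so its only root is
   sigma^2 = S_xy / (N (S_xx - S_xy)). Both phi^ - phi_r and this root are continuous functions of
   the first and second sample moments of the pairs (xbar_t - phi_r, ybar_t - phi_r). These pairs
   are independent across tasks and centred Gaussian with Var(xbar_t) = sigma_r^2 + 1/N and
   Cov(xbar_t, ybar_t) = sigma_r^2, so by the weak law of large numbers the moments converge in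
   probability to (0, 0, sigma_r^2 + 1/N, sigma_r^2), where the root equals sigma_r^2. *)

theory Submission
  imports Defs
begin

section \<open>Derivatives of the losses\<close>

lemma deriv_l_val: "deriv (l_val K Y t) \<theta> = (\<Sum>k<K. \<theta> - Y t k)"
proof (rule DERIV_imp_deriv)
  show "(l_val K Y t has_real_derivative (\<Sum>k<K. \<theta> - Y t k)) (at \<theta>)"
    unfolding l_val_def[abs_def]
    by (auto intro!: derivative_eq_intros
        simp: sum_subtractf diff_divide_distrib sum_distrib_left[symmetric] mult.commute)
qed

lemma deriv_l_tr:
  "deriv (\<lambda>\<theta>. l_tr N X t \<theta> \<phi> s) = (\<lambda>\<theta>. (\<theta> - \<phi>) / s + (\<Sum>n<N. \<theta> - X t n))"
proof (rule ext, rule DERIV_imp_deriv)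
  fix \<theta>
  show "((\<lambda>\<theta>. l_tr N X t \<theta> \<phi> s) has_real_derivative (\<theta> - \<phi>) / s + (\<Sum>n<N. \<theta> - X t n)) (at \<theta>)"
    \<comment> \<open>\<open>divide_inverse\<close> avoids a side condition \<open>s \<noteq> 0\<close>: this holds for every \<open>s\<close>\<close>
    unfolding l_tr_def divide_inverse
    by (auto intro!: derivative_eq_intros
        simp: sum_subtractf diff_divide_distrib algebra_simps sum_distrib_left[symmetric])
qed

lemma deriv2_l_tr: "deriv (deriv (\<lambda>\<theta>. l_tr N X t \<theta> \<phi> s)) \<theta> = 1 / s + real N"
proof (rule DERIV_imp_deriv)
  show "(deriv (\<lambda>\<theta>. l_tr N X t \<theta> \<phi> s) has_real_derivative 1 / s + real N) (at \<theta>)"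
    unfolding deriv_l_tr divide_inverse by (auto intro!: derivative_eq_intros)
qed

lemma mixed_deriv_l_tr:
  assumes "s > 0"
  shows "deriv (\<lambda>s'. deriv (\<lambda>\<theta>. l_tr N X t \<theta> \<phi> s') \<theta>) s = - (\<theta> - \<phi>) / s\<^sup>2"
proof (rule DERIV_imp_deriv)
  show "((\<lambda>s'. deriv (\<lambda>\<theta>. l_tr N X t \<theta> \<phi> s') \<theta>) has_real_derivative - (\<theta> - \<phi>) / s\<^sup>2) (at s)"
    unfolding deriv_l_tr using assms
    by (auto intro!: derivative_eq_intros simp: field_simps power2_eq_square)
qed

lemma approx_grad_eq:
  assumes "s > 0"
  shows "approx_grad N K X Y T \<phi> \<theta>s s =
    (\<Sum>t<T. (\<Sum>k<K. \<theta>s t - Y t k) * (\<theta>s t - \<phi>)) / (s * (1 + s * real N))"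
proof -
  have factor: "inverse (1 / s + real N) * inverse (s\<^sup>2) = 1 / (s * (1 + s * real N))"
    using assms by (simp add: field_simps power2_eq_square add_pos_nonneg)
  have summand: "- (d * inverse (1 / s + real N) * (- e / s\<^sup>2)) = d * e / (s * (1 + s * real N))"
    for d e
  proof -
    have "- (d * inverse (1 / s + real N) * (- e / s\<^sup>2))
        = d * e * (inverse (1 / s + real N) * inverse (s\<^sup>2))"
      by (simp add: divide_inverse algebra_simps)
    then show ?thesis unfolding factor by simp
  qed
  show ?thesis
    unfolding approx_grad_def deriv_l_val deriv2_l_tr mixed_deriv_l_tr[OF assms]
      sum_divide_distrib sum_negf[symmetric]
    by (intro sum.cong refl summand)
qed

section \<open>The joint minimiser\<close>

definition sample_mean :: "nat \<Rightarrow> (nat \<Rightarrow> real) \<Rightarrow> real" where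
  "sample_mean n f = (\<Sum>i<n. f i) / real n"

definition grand_mean :: "nat \<Rightarrow> (nat \<Rightarrow> nat \<Rightarrow> real) \<Rightarrow> nat \<Rightarrow> real" where
  "grand_mean N X T = sample_mean T (\<lambda>t. sample_mean N (X t))"

definition shrunk_mean :: "nat \<Rightarrow> (nat \<Rightarrow> nat \<Rightarrow> real) \<Rightarrow> nat \<Rightarrow> real \<Rightarrow> nat \<Rightarrow> real" where
  "shrunk_mean N X T s t =
     (grand_mean N X T + s * real N * sample_mean N (X t)) / (1 + s * real N)"

lemma sum_eq_sample_mean: "n \<ge> 1 \<Longrightarrow> (\<Sum>i<n. f i) = real n * sample_mean n f"
  by (simp add: sample_mean_def)

lemma shrunk_mean_stationary:
  assumes "s > 0" "N \<ge> 1"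
  shows "shrunk_mean N X T s t - grand_mean N X T + s * (\<Sum>n<N. shrunk_mean N X T s t - X t n) = 0"
proof -
  have sum: "(\<Sum>n<N. shrunk_mean N X T s t - X t n) =
      real N * (shrunk_mean N X T s t - sample_mean N (X t))"
    using assms by (simp add: sum_subtractf sum_eq_sample_mean algebra_simps)
  have "0 < 1 + s * real N" using assms by (simp add: add_pos_nonneg)
  then show ?thesis
    unfolding sum unfolding shrunk_mean_def by (simp add: field_simps)
qed

lemma sum_shrunk_mean_deviation:
  assumes "s > 0" "T \<ge> 1"
  shows "(\<Sum>t<T. shrunk_mean N X T s t - grand_mean N X T) = 0"
proof -
  have "0 < 1 + s * real N" using assms by (simp add: add_pos_nonneg)
  then have "shrunk_mean N X T s t - grand_mean N X T =
      s * real N / (1 + s * real N) * (sample_mean N (X t) - grand_mean N X T)" for t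
    by (simp add: shrunk_mean_def field_simps)
  moreover have "(\<Sum>t<T. sample_mean N (X t) - grand_mean N X T) = 0"
    using assms by (simp add: sum_subtractf grand_mean_def sample_mean_def)
  ultimately show ?thesis by (simp del: times_divide_eq_left flip: sum_distrib_left)
qed

lemma l_tr_diff_at_stationary:
  assumes "s > 0" and stat: "a - p + s * (\<Sum>n<N. a - X t n) = 0"
  shows "l_tr N X t a' p' s - l_tr N X t a p s =
    ((a' - a) - (p' - p))\<^sup>2 / (2 * s) + real N / 2 * (a' - a)\<^sup>2 - (a - p) * (p' - p) / s"
proof -
  have "(\<Sum>n<N. (X t n - a')\<^sup>2) - (\<Sum>n<N. (X t n - a)\<^sup>2)
      = (\<Sum>n<N. (a' - a)\<^sup>2 + 2 * (a' - a) * (a - X t n))"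
    by (simp flip: sum_subtractf) (simp add: power2_eq_square algebra_simps)
  also have "\<dots> = real N * (a' - a)\<^sup>2 + 2 * (a' - a) * (\<Sum>n<N. a - X t n)"
    by (simp add: sum.distrib sum_distrib_left)
  also have "(\<Sum>n<N. a - X t n) = - ((a - p) / s)"
    using stat assms(1) by (simp add: field_simps)
  finally have sq: "(\<Sum>n<N. (X t n - a')\<^sup>2) - (\<Sum>n<N. (X t n - a)\<^sup>2)
      = real N * (a' - a)\<^sup>2 - 2 * (a' - a) * ((a - p) / s)"
    by simp
  have "l_tr N X t a' p' s - l_tr N X t a p s = ((a' - p')\<^sup>2 - (a - p)\<^sup>2) / (2 * s)
      + ((\<Sum>n<N. (X t n - a')\<^sup>2) - (\<Sum>n<N. (X t n - a)\<^sup>2)) / 2"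
    unfolding l_tr_def by (simp add: diff_divide_distrib)
  also have "\<dots> = ((a' - a) - (p' - p))\<^sup>2 / (2 * s) + real N / 2 * (a' - a)\<^sup>2
      - (a - p) * (p' - p) / s"
    unfolding sq using assms(1) by (simp add: field_simps power2_eq_square)
  finally show ?thesis .
qed

lemma l_joint_eq_min_plus_squares:
  assumes "s > 0" "N \<ge> 1" "T \<ge> 1"
  shows "l_joint N X T \<theta>s \<phi> s = l_joint N X T (shrunk_mean N X T s) (grand_mean N X T) s
    + (\<Sum>t<T. ((\<theta>s t - shrunk_mean N X T s t) - (\<phi> - grand_mean N X T))\<^sup>2 / (2 * s)
              + real N / 2 * (\<theta>s t - shrunk_mean N X T s t)\<^sup>2)"
proof -
  let ?a = "shrunk_mean N X T s" and ?p = "grand_mean N X T"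
  have "l_joint N X T \<theta>s \<phi> s - l_joint N X T ?a ?p s
      = (\<Sum>t<T. l_tr N X t (\<theta>s t) \<phi> s - l_tr N X t (?a t) ?p s)"
    unfolding l_joint_def by (simp add: sum_subtractf)
  also have "\<dots> = (\<Sum>t<T. ((\<theta>s t - ?a t) - (\<phi> - ?p))\<^sup>2 / (2 * s) + real N / 2 * (\<theta>s t - ?a t)\<^sup>2
      - (?a t - ?p) * (\<phi> - ?p) / s)"
    by (intro sum.cong refl
        l_tr_diff_at_stationary[OF assms(1) shrunk_mean_stationary[OF assms(1,2)]])
  also have "\<dots> = (\<Sum>t<T. ((\<theta>s t - ?a t) - (\<phi> - ?p))\<^sup>2 / (2 * s) + real N / 2 * (\<theta>s t - ?a t)\<^sup>2)
      - (\<Sum>t<T. ?a t - ?p) * (\<phi> - ?p) / s"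
    by (simp only: sum_subtractf flip: sum_divide_distrib sum_distrib_right)
  also have "(\<Sum>t<T. ?a t - ?p) = 0"
    using sum_shrunk_mean_deviation[OF assms(1,3)] .
  finally show ?thesis by simp
qed

lemma is_joint_min_iff:
  assumes "s > 0" "N \<ge> 1" "T \<ge> 1"
  shows "is_joint_min N X T s \<phi> \<theta>s \<longleftrightarrow>
    \<phi> = grand_mean N X T \<and> (\<forall>t<T. \<theta>s t = shrunk_mean N X T s t)"
proof -
  let ?a = "shrunk_mean N X T s" and ?p = "grand_mean N X T"
  define Q where "Q \<theta>s' \<phi>' t =
      ((\<theta>s' t - ?a t) - (\<phi>' - ?p))\<^sup>2 / (2 * s) + real N / 2 * (\<theta>s' t - ?a t)\<^sup>2"
    for \<theta>s' \<phi>' t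
  have Q_nonneg: "Q \<theta>s' \<phi>' t \<ge> 0" for \<theta>s' \<phi>' t
    unfolding Q_def using assms(1) by simp
  have decomp: "l_joint N X T \<theta>s' \<phi>' s = l_joint N X T ?a ?p s + (\<Sum>t<T. Q \<theta>s' \<phi>' t)" for \<theta>s' \<phi>'
    unfolding Q_def by (rule l_joint_eq_min_plus_squares[OF assms])
  have Q_min: "Q ?a ?p t = 0" for t
    unfolding Q_def by simp
  have "is_joint_min N X T s \<phi> \<theta>s \<longleftrightarrow> (\<forall>\<phi>' \<theta>s'. (\<Sum>t<T. Q \<theta>s \<phi> t) \<le> (\<Sum>t<T. Q \<theta>s' \<phi>' t))"
    unfolding is_joint_min_def
  proof (intro all_cong1)
    show "l_joint N X T \<theta>s \<phi> s \<le> l_joint N X T \<theta>s' \<phi>' s \<longleftrightarrow>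
        (\<Sum>t<T. Q \<theta>s \<phi> t) \<le> (\<Sum>t<T. Q \<theta>s' \<phi>' t)" for \<phi>' \<theta>s'
      unfolding decomp[of \<theta>s \<phi>] decomp[of \<theta>s' \<phi>'] by simp
  qed
  also have "\<dots> \<longleftrightarrow> (\<Sum>t<T. Q \<theta>s \<phi> t) = 0"
  proof
    assume "\<forall>\<phi>' \<theta>s'. (\<Sum>t<T. Q \<theta>s \<phi> t) \<le> (\<Sum>t<T. Q \<theta>s' \<phi>' t)"
    then have "(\<Sum>t<T. Q \<theta>s \<phi> t) \<le> (\<Sum>t<T. Q ?a ?p t)" by blast
    then have "(\<Sum>t<T. Q \<theta>s \<phi> t) \<le> 0" by (simp add: Q_min)
    then show "(\<Sum>t<T. Q \<theta>s \<phi> t) = 0"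
      by (simp add: Q_nonneg antisym sum_nonneg)
  qed (simp add: Q_nonneg sum_nonneg)
  also have "\<dots> \<longleftrightarrow> (\<forall>t<T. Q \<theta>s \<phi> t = 0)"
    by (auto simp: sum_nonneg_eq_0_iff Q_nonneg)
  also have "\<dots> \<longleftrightarrow> (\<forall>t<T. \<theta>s t = ?a t \<and> \<phi> = ?p)"
    unfolding Q_def using assms(1,2) by (auto simp: add_nonneg_eq_0_iff)
  also have "\<dots> \<longleftrightarrow> \<phi> = ?p \<and> (\<forall>t<T. \<theta>s t = ?a t)"
    using assms(3) by auto
  finally show ?thesis .
qed

section \<open>The estimating equation for the variance\<close>

definition scatter_xx :: "nat \<Rightarrow> (nat \<Rightarrow> nat \<Rightarrow> real) \<Rightarrow> nat \<Rightarrow> real" where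
  "scatter_xx N X T = (\<Sum>t<T. (sample_mean N (X t) - grand_mean N X T)\<^sup>2)"

definition scatter_xy ::
  "nat \<Rightarrow> nat \<Rightarrow> (nat \<Rightarrow> nat \<Rightarrow> real) \<Rightarrow> (nat \<Rightarrow> nat \<Rightarrow> real) \<Rightarrow> nat \<Rightarrow> real" where
  "scatter_xy N K X Y T =
     (\<Sum>t<T. (sample_mean N (X t) - grand_mean N X T) * (sample_mean K (Y t) - grand_mean N X T))"

lemma approx_grad_shrunk_mean_eq:
  assumes "s > 0" "K \<ge> 1"
  shows "approx_grad N K X Y T (grand_mean N X T) (shrunk_mean N X T s) s =
    real K * real N / (1 + s * real N) ^ 3
      * (s * real N * scatter_xx N X T - (1 + s * real N) * scatter_xy N K X Y T)"
proof -
  let ?p = "grand_mean N X T" and ?c = "1 + s * real N"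
  let ?C = "real K * s * real N / ?c\<^sup>2"
  have c: "?c > 0" using assms by (simp add: add_pos_nonneg)
  have summand: "(\<Sum>k<K. shrunk_mean N X T s t - Y t k) * (shrunk_mean N X T s t - ?p) =
      ?C * (s * real N * (sample_mean N (X t) - ?p)\<^sup>2
        - ?c * ((sample_mean N (X t) - ?p) * (sample_mean K (Y t) - ?p)))" for t
  proof -
    have sum: "(\<Sum>k<K. shrunk_mean N X T s t - Y t k) =
        real K * (shrunk_mean N X T s t - sample_mean K (Y t))"
      using assms by (simp add: sum_subtractf sum_eq_sample_mean algebra_simps)
    show ?thesis
      unfolding sum unfolding shrunk_mean_def using c by (simp add: field_simps power2_eq_square)
  qed
  have "(\<Sum>t<T. (\<Sum>k<K. shrunk_mean N X T s t - Y t k) * (shrunk_mean N X T s t - ?p)) =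
      (\<Sum>t<T. ?C * (s * real N * (sample_mean N (X t) - ?p)\<^sup>2
        - ?c * ((sample_mean N (X t) - ?p) * (sample_mean K (Y t) - ?p))))"
    by (intro sum.cong refl summand)
  also have "\<dots> = ?C * (s * real N * scatter_xx N X T - ?c * scatter_xy N K X Y T)"
    unfolding scatter_xx_def scatter_xy_def
    by (simp only: sum_subtractf flip: sum_distrib_left)
  finally have sum_over_tasks:
    "(\<Sum>t<T. (\<Sum>k<K. shrunk_mean N X T s t - Y t k) * (shrunk_mean N X T s t - ?p))
      = ?C * (s * real N * scatter_xx N X T - ?c * scatter_xy N K X Y T)" .
  have "real K * real N / ?c ^ 3 = ?C / (s * ?c)"
    using assms(1) by (simp add: power2_eq_square power3_eq_cube ac_simps)
  then show ?thesis
    unfolding approx_grad_eq[OF assms(1)] sum_over_tasks by simp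
qed

lemma joint_min_approx_grad_zero_iff:
  assumes "s > 0" "N \<ge> 1" "K \<ge> 1" "T \<ge> 1"
  shows "is_joint_min N X T s \<phi> \<theta>s \<and> approx_grad N K X Y T \<phi> \<theta>s s = 0 \<longleftrightarrow>
    \<phi> = grand_mean N X T \<and> (\<forall>t<T. \<theta>s t = shrunk_mean N X T s t) \<and>
    s * real N * (scatter_xx N X T - scatter_xy N K X Y T) = scatter_xy N K X Y T"
proof (cases "\<phi> = grand_mean N X T \<and> (\<forall>t<T. \<theta>s t = shrunk_mean N X T s t)")
  case True
  then have "approx_grad N K X Y T \<phi> \<theta>s s =
      approx_grad N K X Y T (grand_mean N X T) (shrunk_mean N X T s) s"
    unfolding approx_grad_eq[OF assms(1)] by (intro arg_cong2[where f="(/)"] sum.cong) auto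
  also have "\<dots> = 0 \<longleftrightarrow>
      s * real N * scatter_xx N X T - (1 + s * real N) * scatter_xy N K X Y T = 0"
    unfolding approx_grad_shrunk_mean_eq[OF assms(1,3)] using assms
    by (simp add: add_pos_nonneg less_imp_neq[symmetric])
  also have "\<dots> \<longleftrightarrow> s * real N * (scatter_xx N X T - scatter_xy N K X Y T) = scatter_xy N K X Y T"
    by (auto simp: algebra_simps)
  finally show ?thesis
    using True is_joint_min_iff[OF assms(1,2,4)] by simp
next
  case False
  then show ?thesis using is_joint_min_iff[OF assms(1,2,4)] by blast
qed

(* If a = b = 0 every s > 0 is a root; the hypothesis on P makes both sides false then. *)
lemma positive_root_of_linear_iff:
  fixes n a b :: real
  assumes "n > 0" and "\<not> (\<forall>s>0. P s)"
  shows "((\<exists>s>0. s * n * (a - b) = b) \<and> (\<forall>s>0. s * n * (a - b) = b \<longrightarrow> P s)) \<longleftrightarrow>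
    0 < b / (n * (a - b)) \<and> P (b / (n * (a - b)))"
proof (cases "a = b")
  case True
  then show ?thesis using assms(2) by auto
next
  case False
  then have "s * n * (a - b) = b \<longleftrightarrow> s = b / (n * (a - b))" for s
    using assms(1) by (auto simp: field_simps)
  then show ?thesis by auto
qed

lemma estimate_good_iff:
  assumes "N \<ge> 1" "K \<ge> 1" "T \<ge> 1"
  shows "estimate_good N K X Y T \<phi>r \<sigma>r2 \<epsilon> \<longleftrightarrow>
    0 < scatter_xy N K X Y T / (real N * (scatter_xx N X T - scatter_xy N K X Y T)) \<and>
    \<bar>grand_mean N X T - \<phi>r\<bar> < \<epsilon> \<and>
    \<bar>scatter_xy N K X Y T / (real N * (scatter_xx N X T - scatter_xy N K X Y T)) - \<sigma>r2\<bar> < \<epsilon>"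
proof -
  let ?a = "scatter_xx N X T" and ?b = "scatter_xy N K X Y T"
  let ?P = "\<lambda>s. \<bar>grand_mean N X T - \<phi>r\<bar> < \<epsilon> \<and> \<bar>s - \<sigma>r2\<bar> < \<epsilon>"
  have exists: "(\<exists>\<phi> \<theta>s. is_joint_min N X T s \<phi> \<theta>s \<and> approx_grad N K X Y T \<phi> \<theta>s s = 0)
      \<longleftrightarrow> s * real N * (?a - ?b) = ?b" if "s > 0" for s
    unfolding joint_min_approx_grad_zero_iff[OF that assms] by auto
  have all: "(\<forall>\<phi> \<theta>s. is_joint_min N X T s \<phi> \<theta>s \<and> approx_grad N K X Y T \<phi> \<theta>s s = 0 \<longrightarrow>
          \<bar>\<phi> - \<phi>r\<bar> < \<epsilon> \<and> \<bar>s - \<sigma>r2\<bar> < \<epsilon>)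
      \<longleftrightarrow> (s * real N * (?a - ?b) = ?b \<longrightarrow> ?P s)" if "s > 0" for s
    unfolding joint_min_approx_grad_zero_iff[OF that assms] by auto
  have "estimate_good N K X Y T \<phi>r \<sigma>r2 \<epsilon> \<longleftrightarrow>
      (\<exists>s>0. s * real N * (?a - ?b) = ?b) \<and> (\<forall>s>0. s * real N * (?a - ?b) = ?b \<longrightarrow> ?P s)"
    unfolding estimate_good_def using exists all by auto
  moreover have "\<not> (\<forall>s>0. ?P s)"
  proof
    assume "\<forall>s>0. ?P s"
    moreover have "\<bar>\<sigma>r2\<bar> + \<bar>\<epsilon>\<bar> + 1 > 0" by (simp add: add_nonneg_pos)
    ultimately have "?P (\<bar>\<sigma>r2\<bar> + \<bar>\<epsilon>\<bar> + 1)" by blast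
    then show False by linarith
  qed
  ultimately show ?thesis
    using positive_root_of_linear_iff[of "real N" ?P ?a ?b] assms(1) by simp
qed

lemma sum_centred_products:
  assumes "T \<ge> 1"
  shows "(\<Sum>t<T. (u t - sample_mean T u) * (v t - sample_mean T u)) =
    real T * (sample_mean T (\<lambda>t. u t * v t) - sample_mean T u * sample_mean T v)"
proof -
  let ?m = "sample_mean T u"
  have "(\<Sum>t<T. (u t - ?m) * (v t - ?m)) =
      (\<Sum>t<T. u t * v t) - ?m * (\<Sum>t<T. v t) - ?m * (\<Sum>t<T. u t) + real T * ?m\<^sup>2"
    by (simp add: algebra_simps sum.distrib sum_subtractf sum_distrib_left power2_eq_square)
  also have "\<dots> = real T * (sample_mean T (\<lambda>t. u t * v t) - ?m * sample_mean T v)"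
    using assms by (simp add: sum_eq_sample_mean algebra_simps power2_eq_square)
  finally show ?thesis .
qed

definition sample_moments :: "nat \<Rightarrow> (nat \<Rightarrow> real) \<Rightarrow> (nat \<Rightarrow> real) \<Rightarrow> real \<times> real \<times> real \<times> real" where
  "sample_moments T u v = (sample_mean T u, sample_mean T v,
     sample_mean T (\<lambda>t. (u t)\<^sup>2), sample_mean T (\<lambda>t. u t * v t))"

(* With (a, b, c, d) the sample means of u, v, u^2 and u v, this is S_xy / (n (S_xx - S_xy))
   with both scatters divided by T. *)
definition sigma2_of_moments :: "real \<Rightarrow> real \<times> real \<times> real \<times> real \<Rightarrow> real" where
  "sigma2_of_moments n = (\<lambda>(a, b, c, d). (d - a * b) / (n * (c - a\<^sup>2 - (d - a * b))))"

(* A zero denominator makes sigma2_of_moments vanish, so the first conjunct excludes it too. *)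
definition moments_estimate_good :: "real \<Rightarrow> real \<Rightarrow> real \<Rightarrow> real \<times> real \<times> real \<times> real \<Rightarrow> bool" where
  "moments_estimate_good n \<sigma>2 \<epsilon> q \<longleftrightarrow>
     0 < sigma2_of_moments n q \<and> \<bar>fst q\<bar> < \<epsilon> \<and> \<bar>sigma2_of_moments n q - \<sigma>2\<bar> < \<epsilon>"

lemma estimate_good_iff_moments:
  assumes "N \<ge> 1" "K \<ge> 1" "T \<ge> 1"
  shows "estimate_good N K X Y T \<phi>r \<sigma>r2 \<epsilon> \<longleftrightarrow> moments_estimate_good (real N) \<sigma>r2 \<epsilon>
    (sample_moments T (\<lambda>t. sample_mean N (X t) - \<phi>r) (\<lambda>t. sample_mean K (Y t) - \<phi>r))"
proof -
  define u where "u t = sample_mean N (X t) - \<phi>r" for t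
  define v where "v t = sample_mean K (Y t) - \<phi>r" for t
  have grand: "grand_mean N X T - \<phi>r = sample_mean T u"
    using assms(3)
    by (simp add: grand_mean_def sample_mean_def u_def sum_subtractf diff_divide_distrib)
  have "scatter_xx N X T = real T * (sample_mean T (\<lambda>t. (u t)\<^sup>2) - (sample_mean T u)\<^sup>2)"
    "scatter_xy N K X Y T =
      real T * (sample_mean T (\<lambda>t. u t * v t) - sample_mean T u * sample_mean T v)"
    using sum_centred_products[OF assms(3), of u u] sum_centred_products[OF assms(3), of u v]
    unfolding scatter_xx_def scatter_xy_def
    by (simp_all add: u_def v_def grand[symmetric] power2_eq_square)
  then show ?thesis
    unfolding estimate_good_iff[OF assms] moments_estimate_good_def sigma2_of_moments_def
      sample_moments_def u_def[symmetric] v_def[symmetric] grand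
    using assms(3) by (simp add: right_diff_distrib[symmetric])
qed

lemma eventually_moments_estimate_good:
  fixes n \<sigma>2 \<epsilon> :: real
  assumes n: "n > 0" and \<sigma>2: "\<sigma>2 > 0" and \<epsilon>: "\<epsilon> > 0"
  shows "eventually (moments_estimate_good n \<sigma>2 \<epsilon>) (nhds (0, 0, \<sigma>2 + 1 / n, \<sigma>2))"
proof -
  have est: "(sigma2_of_moments n \<longlongrightarrow> \<sigma>2) (nhds (0, 0, \<sigma>2 + 1 / n, \<sigma>2))"
    unfolding sigma2_of_moments_def case_prod_unfold
    by (rule tendsto_eq_intros filterlim_ident refl | use n in simp)+
  have fst: "(fst \<longlongrightarrow> 0) (nhds (0::real, 0::real, \<sigma>2 + 1 / n, \<sigma>2))"
    by (rule tendsto_eq_intros filterlim_ident refl | simp)+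
  have "min \<sigma>2 \<epsilon> > 0" using \<sigma>2 \<epsilon> by simp
  from tendstoD[OF est this] tendstoD[OF fst \<epsilon>] show ?thesis
    unfolding moments_estimate_good_def by eventually_elim (auto simp: dist_real_def)
qed

section \<open>Second moments and convergence in probability\<close>

lemma abs_mult_le_sum_squares: "\<bar>a * b\<bar> \<le> a\<^sup>2 + (b::real)\<^sup>2"
proof -
  have "2 * \<bar>a\<bar> * \<bar>b\<bar> \<le> a\<^sup>2 + b\<^sup>2"
    using sum_squares_bound[of "\<bar>a\<bar>" "\<bar>b\<bar>"] by simp
  moreover have "0 \<le> \<bar>a\<bar> * \<bar>b\<bar>" by simp
  ultimately show ?thesis unfolding abs_mult by linarith
qed

lemma square_integrable_mult:
  fixes f g :: "'a \<Rightarrow> real"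
  assumes [measurable]: "f \<in> borel_measurable M" "g \<in> borel_measurable M"
    and "integrable M (\<lambda>x. (f x)\<^sup>2)" "integrable M (\<lambda>x. (g x)\<^sup>2)"
  shows "integrable M (\<lambda>x. f x * g x)"
proof (rule Bochner_Integration.integrable_bound)
  show "integrable M (\<lambda>x. (f x)\<^sup>2 + (g x)\<^sup>2)"
    using assms(3,4) by (rule Bochner_Integration.integrable_add)
  show "AE x in M. norm (f x * g x) \<le> norm ((f x)\<^sup>2 + (g x)\<^sup>2)"
    using abs_mult_le_sum_squares by simp
qed measurable

context prob_space
begin

lemma variance_le_second_moment:
  fixes X :: "'a \<Rightarrow> real"
  assumes "random_variable borel X" "integrable M (\<lambda>x. (X x)\<^sup>2)"
  shows "variance X \<le> expectation (\<lambda>x. (X x)\<^sup>2)"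
  using variance_eq[OF square_integrable_imp_integrable[OF assms] assms(2)] by simp

lemma expectation_centred_product_indep:
  fixes X Y :: "'a \<Rightarrow> real"
  assumes "indep_var borel X borel Y" "integrable M X" "integrable M Y"
  shows "expectation (\<lambda>x. (X x - expectation X) * (Y x - expectation Y)) = 0"
proof -
  have "indep_var borel (\<lambda>x. X x - expectation X) borel (\<lambda>x. Y x - expectation Y)"
    using indep_var_compose[OF assms(1),
        of "\<lambda>z. z - expectation X" borel "\<lambda>z. z - expectation Y" borel]
    by (simp add: comp_def)
  then show ?thesis
    using assms(2,3) by (subst indep_var_lebesgue_integral) (auto simp: prob_space)
qed

lemma variance_sum_pairwise_indep:
  fixes Y :: "'i \<Rightarrow> 'a \<Rightarrow> real"
  assumes "finite I"
    and rv[measurable]: "\<And>i. i \<in> I \<Longrightarrow> random_variable borel (Y i)"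
    and sq: "\<And>i. i \<in> I \<Longrightarrow> integrable M (\<lambda>x. (Y i x)\<^sup>2)"
    and indep: "\<And>i j. i \<in> I \<Longrightarrow> j \<in> I \<Longrightarrow> i \<noteq> j \<Longrightarrow> indep_var borel (Y i) borel (Y j)"
  shows "variance (\<lambda>x. \<Sum>i\<in>I. Y i x) = (\<Sum>i\<in>I. variance (Y i))"
proof -
  define Z where "Z i x = Y i x - expectation (Y i)" for i x
  have int: "integrable M (Y i)" if "i \<in> I" for i
    using square_integrable_imp_integrable[OF rv[OF that] sq[OF that]] .
  have Z_mult: "integrable M (\<lambda>x. Z i x * Z j x)" if "i \<in> I" "j \<in> I" for i j
    using that sq int unfolding Z_def
    by (intro square_integrable_mult) (auto simp: power2_diff)
  have diagonal: "(\<Sum>j\<in>I. expectation (\<lambda>x. Z i x * Z j x)) = expectation (\<lambda>x. Z i x * Z i x)"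
    if "i \<in> I" for i
  proof -
    have "(\<Sum>j\<in>I. expectation (\<lambda>x. Z i x * Z j x)) =
        (\<Sum>j\<in>I. if j = i then expectation (\<lambda>x. Z i x * Z i x) else 0)"
      using that indep int unfolding Z_def
      by (intro sum.cong) (auto intro: expectation_centred_product_indep)
    then show ?thesis using assms(1) that by simp
  qed
  have centred: "(\<Sum>i\<in>I. Y i x) - expectation (\<lambda>x. \<Sum>i\<in>I. Y i x) = (\<Sum>i\<in>I. Z i x)" for x
    using int by (simp add: Z_def Bochner_Integration.integral_sum sum_subtractf)
  have "variance (\<lambda>x. \<Sum>i\<in>I. Y i x) = expectation (\<lambda>x. \<Sum>i\<in>I. \<Sum>j\<in>I. Z i x * Z j x)"
    unfolding centred by (simp add: power2_eq_square sum_product)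
  also have "\<dots> = (\<Sum>i\<in>I. \<Sum>j\<in>I. expectation (\<lambda>x. Z i x * Z j x))"
    using Z_mult by (simp add: Bochner_Integration.integral_sum)
  also have "\<dots> = (\<Sum>i\<in>I. variance (Y i))"
    using diagonal by (simp add: Z_def power2_eq_square)
  finally show ?thesis .
qed

lemma distributed_normal_moments:
  assumes "\<sigma> > 0" and D: "distributed M lborel X (normal_density 0 \<sigma>)"
  shows "random_variable borel X"
    and "integrable M (\<lambda>\<omega>. X \<omega> ^ k)"
    and "expectation X = 0"
    and "expectation (\<lambda>\<omega>. (X \<omega>)\<^sup>2) = \<sigma>\<^sup>2"
    and "expectation (\<lambda>\<omega>. X \<omega> ^ 4) = 3 * (\<sigma>\<^sup>2)\<^sup>2"
proof -
  show "random_variable borel X"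
    using distributed_measurable[OF D] by simp
  show "integrable M (\<lambda>\<omega>. X \<omega> ^ k)" for k
    using distributed_integrable[OF D, of "\<lambda>x. x ^ k"] assms(1)
      integrable_normal_moment[where \<mu>=0 and \<sigma>=\<sigma> and k=k]
    by simp
  show "expectation X = 0"
    using normal_distributed_expectation[OF assms] .
  show "expectation (\<lambda>\<omega>. (X \<omega>)\<^sup>2) = \<sigma>\<^sup>2"
    using distributed_integral[OF D, of "\<lambda>x. x\<^sup>2"]
      integral_normal_moment_even[OF assms(1), of 0 1]
    by simp
  show "expectation (\<lambda>\<omega>. X \<omega> ^ 4) = 3 * (\<sigma>\<^sup>2)\<^sup>2"
    using distributed_integral[OF D, of "\<lambda>x. x ^ 4"]
      integral_normal_moment_even[OF assms(1), of 0 2]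
    by (simp add: fact_numeral field_simps)
qed

definition converges_in_prob :: "(nat \<Rightarrow> 'a \<Rightarrow> 'b::metric_space) \<Rightarrow> 'b \<Rightarrow> bool" where
  "converges_in_prob X c \<longleftrightarrow> (\<forall>n. X n \<in> borel_measurable M) \<and>
     (\<forall>\<delta>>0. (\<lambda>n. prob {x \<in> space M. \<delta> \<le> dist (X n x) c}) \<longlonglongrightarrow> 0)"

lemma prob_sample_mean_deviation_le:
  fixes Y :: "nat \<Rightarrow> 'a \<Rightarrow> real"
  assumes rv[measurable]: "\<And>t. random_variable borel (Y t)"
    and sq: "\<And>t. integrable M (\<lambda>x. (Y t x)\<^sup>2)"
    and mean: "\<And>t. expectation (Y t) = \<mu>"
    and var: "\<And>t. variance (Y t) \<le> C"
    and indep: "\<And>s t. s \<noteq> t \<Longrightarrow> indep_var borel (Y s) borel (Y t)"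
    and "T \<ge> 1" "\<delta> > 0"
  shows "prob {x \<in> space M. \<delta> \<le> dist (sample_mean T (\<lambda>t. Y t x)) \<mu>} \<le> C / \<delta>\<^sup>2 / real T"
proof -
  define S where "S x = (\<Sum>t<T. Y t x)" for x
  have S_meas[measurable]: "random_variable borel S"
    unfolding S_def by measurable
  have S_sq: "integrable M (\<lambda>x. (S x)\<^sup>2)"
    unfolding S_def power2_eq_square sum_product
    by (intro Bochner_Integration.integrable_sum square_integrable_mult rv sq)
  have mean_S: "expectation S = real T * \<mu>"
    unfolding S_def[abs_def] using square_integrable_imp_integrable[OF rv sq]
    by (simp add: Bochner_Integration.integral_sum mean)
  have "variance S = (\<Sum>t<T. variance (Y t))"
    unfolding S_def[abs_def] using rv sq indep by (intro variance_sum_pairwise_indep) auto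
  also have "\<dots> \<le> real T * C"
    using sum_mono[of "{..<T}" "\<lambda>t. variance (Y t)" "\<lambda>_. C"] var by simp
  finally have var_S: "variance S \<le> real T * C" .
  have "{x \<in> space M. \<delta> \<le> dist (sample_mean T (\<lambda>t. Y t x)) \<mu>} =
      {x \<in> space M. real T * \<delta> \<le> \<bar>S x - expectation S\<bar>}"
    using assms(6) unfolding mean_S dist_real_def
    by (auto simp: sample_mean_def S_def field_simps abs_mult)
  also have "prob \<dots> \<le> variance S / (real T * \<delta>)\<^sup>2"
    using assms(6,7) by (intro Chebyshev_inequality S_meas S_sq) simp
  also have "\<dots> \<le> real T * C / (real T * \<delta>)\<^sup>2"
    using var_S by (intro divide_right_mono) auto
  also have "\<dots> = C / \<delta>\<^sup>2 / real T"
    using assms(6) by (simp add: power2_eq_square)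
  finally show ?thesis .
qed

theorem weak_law_of_large_numbers:
  fixes Y :: "nat \<Rightarrow> 'a \<Rightarrow> real"
  assumes rv[measurable]: "\<And>t. random_variable borel (Y t)"
    and sq: "\<And>t. integrable M (\<lambda>x. (Y t x)\<^sup>2)"
    and mean: "\<And>t. expectation (Y t) = \<mu>"
    and var: "\<And>t. variance (Y t) \<le> C"
    and indep: "\<And>s t. s \<noteq> t \<Longrightarrow> indep_var borel (Y s) borel (Y t)"
  shows "converges_in_prob (\<lambda>T x. sample_mean T (\<lambda>t. Y t x)) \<mu>"
proof -
  have "(\<lambda>T. prob {x \<in> space M. \<delta> \<le> dist (sample_mean T (\<lambda>t. Y t x)) \<mu>}) \<longlonglongrightarrow> 0"
    if "\<delta> > 0" for \<delta>
  proof (rule tendsto_sandwich[OF _ _ tendsto_const])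
    show "\<forall>\<^sub>F T in sequentially.
        prob {x \<in> space M. \<delta> \<le> dist (sample_mean T (\<lambda>t. Y t x)) \<mu>} \<le> C / \<delta>\<^sup>2 / real T"
      using eventually_ge_at_top[of 1]
      by eventually_elim (rule prob_sample_mean_deviation_le[OF assms _ that])
    show "(\<lambda>T. C / \<delta>\<^sup>2 / real T) \<longlonglongrightarrow> 0"
      by (intro tendsto_divide_0[OF tendsto_const] filterlim_at_top_imp_at_infinity
          filterlim_real_sequentially)
  qed simp
  moreover have "(\<lambda>x. sample_mean T (\<lambda>t. Y t x)) \<in> borel_measurable M" for T
    unfolding sample_mean_def by measurable
  ultimately show ?thesis
    unfolding converges_in_prob_def by blast
qed

lemma converges_in_prob_Pair:
  fixes X :: "nat \<Rightarrow> 'a \<Rightarrow> 'b::{metric_space, second_countable_topology}"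
    and Y :: "nat \<Rightarrow> 'a \<Rightarrow> 'c::{metric_space, second_countable_topology}"
  assumes "converges_in_prob X a" "converges_in_prob Y b"
  shows "converges_in_prob (\<lambda>n x. (X n x, Y n x)) (a, b)"
proof -
  have [measurable]: "X n \<in> borel_measurable M" "Y n \<in> borel_measurable M" for n
    using assms unfolding converges_in_prob_def by auto
  have dist_le: "dist (u, v) (a, b) \<le> dist u a + dist v b" for u :: 'b and v :: 'c
    using sqrt_sum_squares_le_sum_abs[of "dist u a" "dist v b"] by (simp add: dist_Pair_Pair)
  have "(\<lambda>n. prob {x \<in> space M. \<delta> \<le> dist (X n x, Y n x) (a, b)}) \<longlonglongrightarrow> 0" if "\<delta> > 0" for \<delta>
  proof (rule tendsto_sandwich[OF _ _ tendsto_const])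
    let ?A = "\<lambda>n. {x \<in> space M. \<delta> / 2 \<le> dist (X n x) a}"
    let ?B = "\<lambda>n. {x \<in> space M. \<delta> / 2 \<le> dist (Y n x) b}"
    have "\<delta> / 2 > 0" using that by simp
    then have "(\<lambda>n. prob (?A n)) \<longlonglongrightarrow> 0" "(\<lambda>n. prob (?B n)) \<longlonglongrightarrow> 0"
      using assms unfolding converges_in_prob_def by blast+
    from tendsto_add[OF this] show "(\<lambda>n. prob (?A n) + prob (?B n)) \<longlonglongrightarrow> 0"
      by simp
    have "{x \<in> space M. \<delta> \<le> dist (X n x, Y n x) (a, b)} \<subseteq> ?A n \<union> ?B n" for n
    proof
      fix x assume "x \<in> {x \<in> space M. \<delta> \<le> dist (X n x, Y n x) (a, b)}"
      then show "x \<in> ?A n \<union> ?B n" using dist_le[of "X n x" "Y n x"] by auto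
    qed
    then have "prob {x \<in> space M. \<delta> \<le> dist (X n x, Y n x) (a, b)} \<le> prob (?A n) + prob (?B n)" for n
      by (intro order_trans[OF finite_measure_mono measure_Un_le]) measurable
    then show "\<forall>\<^sub>F n in sequentially.
        prob {x \<in> space M. \<delta> \<le> dist (X n x, Y n x) (a, b)} \<le> prob (?A n) + prob (?B n)"
      by simp
  qed simp
  moreover have "(\<lambda>x. (X n x, Y n x)) \<in> borel_measurable M" for n
    by measurable
  ultimately show ?thesis
    unfolding converges_in_prob_def by blast
qed

lemma converges_in_prob_eventually_nhds:
  fixes X :: "nat \<Rightarrow> 'a \<Rightarrow> 'b::{metric_space, second_countable_topology}"
  assumes "converges_in_prob X c" and "eventually P (nhds c)"
    and sets: "\<And>n. {x \<in> space M. P (X n x)} \<in> events"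
  shows "(\<lambda>n. prob {x \<in> space M. P (X n x)}) \<longlonglongrightarrow> 1"
proof -
  have [measurable]: "X n \<in> borel_measurable M" for n
    using assms(1) unfolding converges_in_prob_def by auto
  obtain \<delta> where "\<delta> > 0" and near: "\<And>y. dist y c < \<delta> \<Longrightarrow> P y"
    using assms(2) unfolding eventually_nhds_metric by blast
  let ?far = "\<lambda>n. {x \<in> space M. \<delta> \<le> dist (X n x) c}"
  have "(\<lambda>n. prob (?far n)) \<longlonglongrightarrow> 0"
    using assms(1) \<open>\<delta> > 0\<close> unfolding converges_in_prob_def by blast
  then have lim: "(\<lambda>n. 1 - prob (?far n)) \<longlonglongrightarrow> 1"
    using tendsto_diff[OF tendsto_const] by fastforce
  have "1 - prob (?far n) \<le> prob {x \<in> space M. P (X n x)}" for n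
  proof -
    have "space M - {x \<in> space M. P (X n x)} \<subseteq> ?far n"
      using near not_less by blast
    then have "prob (space M - {x \<in> space M. P (X n x)}) \<le> prob (?far n)"
      by (rule finite_measure_mono) measurable
    then show ?thesis using prob_compl[OF sets] by simp
  qed
  then show ?thesis
    by (intro tendsto_sandwich[OF _ _ lim tendsto_const] always_eventually) auto
qed

end

section \<open>The hierarchical Gaussian model\<close>

locale hierarchical_gaussian = prob_space M for M :: "'a measure" +
  fixes \<theta> :: "nat \<Rightarrow> 'a \<Rightarrow> real" and x y :: "nat \<Rightarrow> nat \<Rightarrow> 'a \<Rightarrow> real"
    and N K :: nat and \<phi>r \<sigma>r2 :: real
  assumes N_ge_1: "N \<ge> 1" and K_ge_1: "K \<ge> 1" and \<sigma>r2_pos: "\<sigma>r2 > 0"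
    and indep: "indep_vars (\<lambda>_. borel) (obs_family \<theta> x y) (obs_indices N K)"
    and dist_task: "\<And>t. distributed M lborel (\<theta> t) (normal_density \<phi>r (sqrt \<sigma>r2))"
    and dist_tr: "\<And>t n. n < N \<Longrightarrow> distributed M lborel (\<lambda>\<omega>. x t n \<omega> - \<theta> t \<omega>) std_normal_density"
    and dist_val: "\<And>t k. k < K \<Longrightarrow> distributed M lborel (\<lambda>\<omega>. y t k \<omega> - \<theta> t \<omega>) std_normal_density"
begin

abbreviation Z :: "obs_idx \<Rightarrow> 'a \<Rightarrow> real" where
  "Z \<equiv> obs_family \<theta> x y"

definition obs_mean :: "obs_idx \<Rightarrow> real" where
  "obs_mean i = (case i of Task _ \<Rightarrow> \<phi>r | _ \<Rightarrow> 0)"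

definition obs_sd :: "obs_idx \<Rightarrow> real" where
  "obs_sd i = (case i of Task _ \<Rightarrow> sqrt \<sigma>r2 | _ \<Rightarrow> 1)"

lemma obs_sd_pos: "obs_sd i > 0"
  using \<sigma>r2_pos by (simp add: obs_sd_def split: obs_idx.split)

lemma distributed_obs:
  "i \<in> obs_indices N K \<Longrightarrow> distributed M lborel (Z i) (normal_density (obs_mean i) (obs_sd i))"
  by (auto simp: obs_indices_def obs_family_def obs_mean_def obs_sd_def dist_task dist_tr dist_val)

lemma distributed_centred_combination:
  assumes J: "finite J" "J \<subseteq> obs_indices N K" and "j \<in> J" "c j \<noteq> 0"
  shows "distributed M lborel (\<lambda>\<omega>. \<Sum>i\<in>J. c i * (Z i \<omega> - obs_mean i))
    (normal_density 0 (sqrt (\<Sum>i\<in>J. (c i * obs_sd i)\<^sup>2)))"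
proof -
  \<comment> \<open>\<open>sum_indep_normal\<close> needs positive standard deviations, so zero terms are dropped.\<close>
  define J' where "J' = {i \<in> J. c i \<noteq> 0}"
  have J': "finite J'" "J' \<noteq> {}" "J' \<subseteq> obs_indices N K"
    using assms by (auto simp: J'_def)
  have ind: "indep_vars (\<lambda>_. borel) (\<lambda>i \<omega>. c i * (Z i \<omega> - obs_mean i)) J'"
    by (rule indep_vars_compose2[OF indep_vars_subset[OF indep J'(3)]]) simp
  have dist:  "distributed M lborel (\<lambda>\<omega>. c i * (Z i \<omega> - obs_mean i))
      (normal_density 0 (\<bar>c i\<bar> * obs_sd i))" if "i \<in> J'" for i
    using normal_density_affine[OF distributed_obs obs_sd_pos, of i "c i" "- c i * obs_mean i"]
      that J'(3)
    by (auto simp: J'_def algebra_simps)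
  have "distributed M lborel (\<lambda>\<omega>. \<Sum>i\<in>J'. c i * (Z i \<omega> - obs_mean i))
      (normal_density (\<Sum>i\<in>J'. 0) (sqrt (\<Sum>i\<in>J'. (\<bar>c i\<bar> * obs_sd i)\<^sup>2)))"
    using obs_sd_pos by (intro sum_indep_normal[OF J'(1,2) ind] dist) (auto simp: J'_def)
  moreover have "(\<Sum>i\<in>J'. f i) = (\<Sum>i\<in>J. f i)" if "\<And>i. c i = 0 \<Longrightarrow> f i = 0" for f :: "obs_idx \<Rightarrow> real"
    unfolding J'_def using J(1) that by (intro sum.mono_neutral_left) auto
  ultimately show ?thesis
    by (simp add: power_mult_distrib)
qed

definition task_block :: "nat \<Rightarrow> obs_idx set" where
  "task_block t = insert (Task t) (Tr t ` {..<N} \<union> Val t ` {..<K})"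

lemma task_block_subset: "task_block t \<subseteq> obs_indices N K"
  by (auto simp: task_block_def obs_indices_def)

lemma sum_task_block:
  "(\<Sum>i\<in>task_block t. f i) = f (Task t) + (\<Sum>n<N. f (Tr t n)) + (\<Sum>k<K. f (Val t k))"
proof -
  have "(\<Sum>i\<in>Tr t ` {..<N} \<union> Val t ` {..<K}. f i) = (\<Sum>n<N. f (Tr t n)) + (\<Sum>k<K. f (Val t k))"
    by (subst sum.union_disjoint) (auto simp: sum.reindex inj_on_def)
  then show ?thesis
    unfolding task_block_def by (subst sum.insert) (auto simp: add.assoc)
qed

definition train_dev :: "nat \<Rightarrow> 'a \<Rightarrow> real" where
  "train_dev t \<omega> = sample_mean N (\<lambda>n. x t n \<omega>) - \<phi>r"

definition val_dev :: "nat \<Rightarrow> 'a \<Rightarrow> real" where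
  "val_dev t \<omega> = sample_mean K (\<lambda>k. y t k \<omega>) - \<phi>r"

(* (train_dev t, val_dev t) computed from the observations of task t alone; this yields the
   independence across tasks. *)
definition task_stats :: "nat \<Rightarrow> (obs_idx \<Rightarrow> real) \<Rightarrow> real \<times> real" where
  "task_stats t f = (f (Task t) - \<phi>r + (\<Sum>n<N. f (Tr t n)) / real N,
                     f (Task t) - \<phi>r + (\<Sum>k<K. f (Val t k)) / real K)"

lemma train_dev_eq: "train_dev t \<omega> = \<theta> t \<omega> - \<phi>r + (\<Sum>n<N. x t n \<omega> - \<theta> t \<omega>) / real N"
  using N_ge_1 by (simp add: train_dev_def sample_mean_def sum_subtractf field_simps)

lemma val_dev_eq: "val_dev t \<omega> = \<theta> t \<omega> - \<phi>r + (\<Sum>k<K. y t k \<omega> - \<theta> t \<omega>) / real K"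
  using K_ge_1 by (simp add: val_dev_def sample_mean_def sum_subtractf field_simps)

lemma devs_eq_task_stats: "(train_dev t \<omega>, val_dev t \<omega>) = task_stats t (\<lambda>i. Z i \<omega>)"
  by (simp add: train_dev_eq val_dev_eq task_stats_def obs_family_def)

lemma distributed_task_combination:
  assumes "a + b \<noteq> 0"
  shows "distributed M lborel (\<lambda>\<omega>. a * train_dev t \<omega> + b * val_dev t \<omega>)
    (normal_density 0 (sqrt ((a + b)\<^sup>2 * \<sigma>r2 + a\<^sup>2 / real N + b\<^sup>2 / real K)))"
proof -
  define c where "c i = (case i of Task _ \<Rightarrow> a + b | Tr _ _ \<Rightarrow> a / real N | Val _ _ \<Rightarrow> b / real K)"
    for i
  have "a * train_dev t \<omega> + b * val_dev t \<omega> = (a + b) * (\<theta> t \<omega> - \<phi>r)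
      + (\<Sum>n<N. a / real N * (x t n \<omega> - \<theta> t \<omega>)) + (\<Sum>k<K. b / real K * (y t k \<omega> - \<theta> t \<omega>))"
    for \<omega>
    by (simp add: train_dev_eq val_dev_eq sum_distrib_left sum_divide_distrib
        diff_divide_distrib algebra_simps)
  also have "\<dots> \<omega> = (\<Sum>i\<in>task_block t. c i * (Z i \<omega> - obs_mean i))" for \<omega>
    by (simp add: sum_task_block c_def obs_mean_def obs_family_def)
  moreover have "(\<Sum>i\<in>task_block t. (c i * obs_sd i)\<^sup>2) =
      (a + b)\<^sup>2 * \<sigma>r2 + a\<^sup>2 / real N + b\<^sup>2 / real K"
    using \<sigma>r2_pos N_ge_1 K_ge_1
    by (simp add: sum_task_block c_def obs_sd_def power_divide power_mult_distrib power2_eq_square)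
  moreover have "distributed M lborel (\<lambda>\<omega>. \<Sum>i\<in>task_block t. c i * (Z i \<omega> - obs_mean i))
      (normal_density 0 (sqrt (\<Sum>i\<in>task_block t. (c i * obs_sd i)\<^sup>2)))"
    using assms task_block_subset
    by (intro distributed_centred_combination[where j="Task t"]) (auto simp: task_block_def c_def)
  ultimately show ?thesis by simp
qed

lemma task_stats_restrict: "task_stats t (restrict f (task_block t)) = task_stats t f"
  by (simp add: task_stats_def task_block_def)

lemma task_stats_measurable:
  "task_stats t \<in> PiM (task_block t) (\<lambda>_. borel) \<rightarrow>\<^sub>M borel \<Otimes>\<^sub>M borel"
proof -
  have [measurable]: "(\<lambda>f. f i) \<in> borel_measurable (PiM (task_block t) (\<lambda>_. borel))"
    if "i \<in> task_block t" for i
    using that by (rule measurable_component_singleton)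
  have [simp]: "Task t \<in> task_block t" "n < N \<Longrightarrow> Tr t n \<in> task_block t"
      "k < K \<Longrightarrow> Val t k \<in> task_block t" for n k
    by (auto simp: task_block_def)
  show ?thesis
    unfolding task_stats_def by measurable
qed

lemma indep_task_functions:
  assumes "s \<noteq> t" and g[measurable]: "g \<in> borel_measurable (borel \<Otimes>\<^sub>M borel)"
  shows "indep_var borel (\<lambda>\<omega>. g (train_dev s \<omega>, val_dev s \<omega>))
    borel (\<lambda>\<omega>. g (train_dev t \<omega>, val_dev t \<omega>))"
proof -
  have "task_block s \<inter> task_block t = {}"
    using assms(1) by (auto simp: task_block_def)
  then have "indep_var (PiM (task_block s) (\<lambda>_. borel)) (\<lambda>\<omega>. restrict (\<lambda>i. Z i \<omega>) (task_block s))
      (PiM (task_block t) (\<lambda>_. borel)) (\<lambda>\<omega>. restrict (\<lambda>i. Z i \<omega>) (task_block t))"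
    using indep_var_restrict[OF indep _ task_block_subset task_block_subset] by blast
  moreover have "g \<circ> task_stats u \<in> borel_measurable (PiM (task_block u) (\<lambda>_. borel))" for u
    using task_stats_measurable[of u] by measurable
  ultimately have "indep_var borel (g \<circ> task_stats s \<circ> (\<lambda>\<omega>. restrict (\<lambda>i. Z i \<omega>) (task_block s)))
      borel (g \<circ> task_stats t \<circ> (\<lambda>\<omega>. restrict (\<lambda>i. Z i \<omega>) (task_block t)))"
    by (intro indep_var_compose)
  then show ?thesis
    by (simp add: comp_def task_stats_restrict devs_eq_task_stats)
qed

lemma combination_moments:
  assumes "a + b \<noteq> 0"
  defines "v \<equiv> (a + b)\<^sup>2 * \<sigma>r2 + a\<^sup>2 / real N + b\<^sup>2 / real K"
  shows "random_variable borel (\<lambda>\<omega>. a * train_dev t \<omega> + b * val_dev t \<omega>)"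
    and "integrable M (\<lambda>\<omega>. (a * train_dev t \<omega> + b * val_dev t \<omega>) ^ k)"
    and "expectation (\<lambda>\<omega>. a * train_dev t \<omega> + b * val_dev t \<omega>) = 0"
    and "expectation (\<lambda>\<omega>. (a * train_dev t \<omega> + b * val_dev t \<omega>)\<^sup>2) = v"
    and "expectation (\<lambda>\<omega>. (a * train_dev t \<omega> + b * val_dev t \<omega>) ^ 4) = 3 * v\<^sup>2"
proof -
  have "v > 0"
    unfolding v_def using assms(1) \<sigma>r2_pos by (intro add_pos_nonneg) auto
  moreover note distributed_normal_moments[OF _ distributed_task_combination[OF assms(1)], of t]
  ultimately show "random_variable borel (\<lambda>\<omega>. a * train_dev t \<omega> + b * val_dev t \<omega>)"
    "integrable M (\<lambda>\<omega>. (a * train_dev t \<omega> + b * val_dev t \<omega>) ^ k)"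
    "expectation (\<lambda>\<omega>. a * train_dev t \<omega> + b * val_dev t \<omega>) = 0"
    "expectation (\<lambda>\<omega>. (a * train_dev t \<omega> + b * val_dev t \<omega>)\<^sup>2) = v"
    "expectation (\<lambda>\<omega>. (a * train_dev t \<omega> + b * val_dev t \<omega>) ^ 4) = 3 * v\<^sup>2"
    unfolding v_def by simp_all
qed

lemmas train_dev_moments = combination_moments[of 1 0, simplified]
lemmas val_dev_moments = combination_moments[of 0 1, simplified]

declare train_dev_moments(1)[measurable] val_dev_moments(1)[measurable]

lemma integrable_train_dev_mult_val_dev: "integrable M (\<lambda>\<omega>. train_dev t \<omega> * val_dev t \<omega>)"
  using train_dev_moments(2)[of t 2] val_dev_moments(2)[of t 2]
  by (intro square_integrable_mult) simp_all

(* Polarisation: train_dev t + val_dev t is centred Gaussian with variance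
   4 sigma_r^2 + 1/N + 1/K. *)
lemma expectation_train_dev_mult_val_dev: "expectation (\<lambda>\<omega>. train_dev t \<omega> * val_dev t \<omega>) = \<sigma>r2"
proof -
  have "4 * \<sigma>r2 + 1 / real N + 1 / real K = expectation (\<lambda>\<omega>. (train_dev t \<omega> + val_dev t \<omega>)\<^sup>2)"
    using combination_moments(4)[of 1 1 t] by simp
  also have "\<dots> = expectation (\<lambda>\<omega>. (train_dev t \<omega>)\<^sup>2)
      + 2 * expectation (\<lambda>\<omega>. train_dev t \<omega> * val_dev t \<omega>)
      + expectation (\<lambda>\<omega>. (val_dev t \<omega>)\<^sup>2)"
    using train_dev_moments(2)[of t 2] val_dev_moments(2)[of t 2]
      integrable_train_dev_mult_val_dev[of t]
    by (simp add: power2_sum mult.assoc)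
  finally show ?thesis
    using train_dev_moments(4) val_dev_moments(4) by simp
qed

lemma task_sample_mean_converges:
  assumes g[measurable]: "g \<in> borel_measurable (borel \<Otimes>\<^sub>M borel)"
    and f: "\<And>t \<omega>. f t \<omega> = g (train_dev t \<omega>, val_dev t \<omega>)"
    and "\<And>t. integrable M (\<lambda>\<omega>. (f t \<omega>)\<^sup>2)"
    and "\<And>t. expectation (f t) = \<mu>"
    and "\<And>t. variance (f t) \<le> C"
  shows "converges_in_prob (\<lambda>T \<omega>. sample_mean T (\<lambda>t. f t \<omega>)) \<mu>"
proof (rule weak_law_of_large_numbers)
  show "random_variable borel (f t)" for t
    unfolding f[abs_def] by measurable
  show "indep_var borel (f s) borel (f t)" if "s \<noteq> t" for s t
    unfolding f[abs_def] using indep_task_functions[OF that g] .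
qed (use assms(3-) in auto)

lemma variance_train_dev_sq_le:
  "variance (\<lambda>\<omega>. (train_dev t \<omega>)\<^sup>2) \<le> 3 * (\<sigma>r2 + 1 / real N)\<^sup>2"
proof -
  have fourth: "((train_dev t \<omega>)\<^sup>2)\<^sup>2 = train_dev t \<omega> ^ 4" for \<omega>
    by (simp flip: power_mult)
  have "variance (\<lambda>\<omega>. (train_dev t \<omega>)\<^sup>2) \<le> expectation (\<lambda>\<omega>. ((train_dev t \<omega>)\<^sup>2)\<^sup>2)"
    using train_dev_moments(2) by (intro variance_le_second_moment) (simp_all add: fourth)
  then show ?thesis
    unfolding fourth train_dev_moments(5) .
qed

lemma variance_train_dev_mult_val_dev_le:
  "variance (\<lambda>\<omega>. train_dev t \<omega> * val_dev t \<omega>) \<le> 3 * (\<sigma>r2 + 1 / real N)\<^sup>2 + 3 * (\<sigma>r2 + 1 / real K)\<^sup>2"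
proof -
  have fourth: "integrable M (\<lambda>\<omega>. train_dev t \<omega> ^ 4)" "integrable M (\<lambda>\<omega>. val_dev t \<omega> ^ 4)"
    using train_dev_moments(2) val_dev_moments(2) .
  then have "variance (\<lambda>\<omega>. train_dev t \<omega> * val_dev t \<omega>)
      \<le> expectation (\<lambda>\<omega>. (train_dev t \<omega> * val_dev t \<omega>)\<^sup>2)"
    by (intro variance_le_second_moment) (simp_all add: power_mult_distrib square_integrable_mult)
  also have "\<dots> \<le> expectation (\<lambda>\<omega>. train_dev t \<omega> ^ 4 + val_dev t \<omega> ^ 4)"
    using fourth abs_mult_le_sum_squares[of "(train_dev t _)\<^sup>2" "(val_dev t _)\<^sup>2"]
    by (intro integral_mono) (simp_all add: power_mult_distrib square_integrable_mult)
  finally show ?thesis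
    using train_dev_moments(5) val_dev_moments(5) fourth by simp
qed

lemma sample_mean_train_dev_converges:
  "converges_in_prob (\<lambda>T \<omega>. sample_mean T (\<lambda>t. train_dev t \<omega>)) 0"
  using task_sample_mean_converges[of fst train_dev 0 "\<sigma>r2 + 1 / real N"] train_dev_moments
  by (simp add: variance_le_second_moment)

lemma sample_mean_val_dev_converges:
  "converges_in_prob (\<lambda>T \<omega>. sample_mean T (\<lambda>t. val_dev t \<omega>)) 0"
  using task_sample_mean_converges[of snd val_dev 0 "\<sigma>r2 + 1 / real K"] val_dev_moments
  by (simp add: variance_le_second_moment)

lemma sample_mean_train_dev_sq_converges:
  "converges_in_prob (\<lambda>T \<omega>. sample_mean T (\<lambda>t. (train_dev t \<omega>)\<^sup>2)) (\<sigma>r2 + 1 / real N)"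
  using train_dev_moments(2,4) variance_train_dev_sq_le
  by (intro task_sample_mean_converges[of "\<lambda>p. (fst p)\<^sup>2"]) (simp_all flip: power_mult)

lemma sample_mean_train_dev_mult_val_dev_converges:
  "converges_in_prob (\<lambda>T \<omega>. sample_mean T (\<lambda>t. train_dev t \<omega> * val_dev t \<omega>)) \<sigma>r2"
  using train_dev_moments(2) val_dev_moments(2) variance_train_dev_mult_val_dev_le
    expectation_train_dev_mult_val_dev
  by (intro task_sample_mean_converges[of "\<lambda>p. fst p * snd p"])
    (simp_all add: power_mult_distrib square_integrable_mult)

lemma sample_moments_converge:
  "converges_in_prob (\<lambda>T \<omega>. sample_moments T (\<lambda>t. train_dev t \<omega>) (\<lambda>t. val_dev t \<omega>))
    (0, 0, \<sigma>r2 + 1 / real N, \<sigma>r2)"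
  unfolding sample_moments_def
  by (intro converges_in_prob_Pair sample_mean_train_dev_converges sample_mean_val_dev_converges
      sample_mean_train_dev_sq_converges sample_mean_train_dev_mult_val_dev_converges)

theorem estimate_good_tendsto_1:
  assumes "\<epsilon> > 0"
  shows "(\<lambda>T. prob {\<omega> \<in> space M. estimate_good N K (\<lambda>t n. x t n \<omega>) (\<lambda>t k. y t k \<omega>) T \<phi>r \<sigma>r2 \<epsilon>})
    \<longlonglongrightarrow> 1"
proof -
  let ?good = "\<lambda>T \<omega>. moments_estimate_good (real N) \<sigma>r2 \<epsilon>
    (sample_moments T (\<lambda>t. train_dev t \<omega>) (\<lambda>t. val_dev t \<omega>))"
  have "eventually (moments_estimate_good (real N) \<sigma>r2 \<epsilon>) (nhds (0, 0, \<sigma>r2 + 1 / real N, \<sigma>r2))"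
    using N_ge_1 \<sigma>r2_pos assms by (intro eventually_moments_estimate_good) auto
  moreover have "{\<omega> \<in> space M. ?good T \<omega>} \<in> events" for T
    unfolding moments_estimate_good_def sigma2_of_moments_def sample_moments_def sample_mean_def
    by measurable
  ultimately have "(\<lambda>T. prob {\<omega> \<in> space M. ?good T \<omega>}) \<longlonglongrightarrow> 1"
    by (rule converges_in_prob_eventually_nhds[OF sample_moments_converge])
  moreover have "\<forall>\<^sub>F T in sequentially. prob {\<omega> \<in> space M. ?good T \<omega>} =
      prob {\<omega> \<in> space M. estimate_good N K (\<lambda>t n. x t n \<omega>) (\<lambda>t k. y t k \<omega>) T \<phi>r \<sigma>r2 \<epsilon>}"
    using eventually_ge_at_top[of 1]
    by eventually_elim
      (use estimate_good_iff_moments[OF N_ge_1 K_ge_1] in \<open>simp add: train_dev_def val_dev_def\<close>)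
  ultimately show ?thesis
    by (rule Lim_transform_eventually)
qed

end

theorem proposition3:
  fixes M :: "'a measure"
    and \<theta> :: "nat \<Rightarrow> 'a \<Rightarrow> real"
    and x y :: "nat \<Rightarrow> nat \<Rightarrow> 'a \<Rightarrow> real"
    and N K :: nat and \<phi>r \<sigma>r2 :: real
  assumes "prob_space M"
    and "N \<ge> 1" and "K \<ge> 1" and "\<sigma>r2 > 0"
    and indep: "prob_space.indep_vars M (\<lambda>_. borel) (obs_family \<theta> x y) (obs_indices N K)"
    and dist_task: "\<And>t. distributed M lborel (\<theta> t) (normal_density \<phi>r (sqrt \<sigma>r2))"
    and dist_tr: "\<And>t n. n < N \<Longrightarrow> distributed M lborel (\<lambda>\<omega>. x t n \<omega> - \<theta> t \<omega>) std_normal_density"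
    and dist_val: "\<And>t k. k < K \<Longrightarrow> distributed M lborel (\<lambda>\<omega>. y t k \<omega> - \<theta> t \<omega>) std_normal_density"
  shows "\<forall>\<epsilon>>0. (\<lambda>T. measure M {\<omega> \<in> space M.
            estimate_good N K (\<lambda>t n. x t n \<omega>) (\<lambda>t k. y t k \<omega>) T \<phi>r \<sigma>r2 \<epsilon>})
          \<longlonglongrightarrow> 1"
proof -
  interpret hierarchical_gaussian M \<theta> x y N K \<phi>r \<sigma>r2
    using assms by (intro hierarchical_gaussian.intro hierarchical_gaussian_axioms.intro) auto
  show ?thesis
    using estimate_good_tendsto_1 by blast
qed

end
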